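(* Let $d\ge2$ and let $N$ be a nonnegative integer random variable with $E[N]<\infty$. Then for the anisotropic percolation with random range with range distribution $N$, $q_c(p)>0$ for every $p\in[0,1)$; that is, for every $p<1$ there exists $q>0$ with $\theta(p,q)=0$.
   Context: Anisotropic percolation with random range (APRR). Let $d\ge2$, let $(\vec e_i)_{i=1}^d$ be the canonical basis of $\mathbb{Z}^d$, $o$ the origin. Let $\mathbb{E}_h=\bigcup_{n\ge1}\{(x,y)\in\mathbb{Z}^d\times\mathbb{Z}^d: y-x=n\vec e_1\}$ and $\mathbb{E}_v=\{(x,y): y-x=\vec e_i,\ i\in\{2,\dots,d\}\}$ (oriented bonds). Given i.i.d. random variables $\mathbf N=(N_x)_{x\in\mathbb{Z}^d}$ with common law $N$ (nonnegative integer valued), let $G_{\mathbf N}$ be the oriented graph with vertex set $\mathbb{Z}^d$ and bond set $\mathbb{E}_v\cup\bigcup_{x}\{(x,x+n\vec e_1): 1\le n\le N_x\}$. Given $p,q\in[0,1]$, each bond of $G_{\mathbf N}$ in $\mathbb{E}_h$ is open with probability $p$ and each bond in $\mathbb{E}_v$ is open with probability $q$, independently of each other (conditionally on $\mathbf N$). $(x\to y)$ denotes the existence of an oriented path of open bonds from $x$ to $y$, and $(x\to\infty)$ the event that $x$ is connected by oriented open paths to infinitely many vertices. Let $P$ be the joint law, $\theta(p,q)=P(o\to\infty)$ and $q_c(p)=\sup\{q:\theta(p,q)=0\}$. *)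

theory Defs
  imports "HOL-Probability.Probability"
begin

text \<open>Vertices of Z^d: functions nat => int vanishing at coordinates >= d.
  Coordinate 0 plays the role of the direction e_1; coordinates 1..d-1 are e_2..e_d.\<close>

definition vertices :: "nat \<Rightarrow> (nat \<Rightarrow> int) set" where
  "vertices d = {x. \<forall>j\<ge>d. x j = 0}"

definition origin :: "nat \<Rightarrow> int" where
  "origin = (\<lambda>_. 0)"

definition shift :: "(nat \<Rightarrow> int) \<Rightarrow> nat \<Rightarrow> int \<Rightarrow> (nat \<Rightarrow> int)" where
  "shift x i n = (\<lambda>j. if j = i then x j + n else x j)"

text \<open>Random variables of the model: the range N_x at each site, the state of each
  potential horizontal bond (x, x + n e_1), n >= 1, and the state of each vertical bond
  (x, x + e_i), 1 <= i < d.  Horizontal bond (x, x + n e_1) belongs to G_N iff n <= N_x;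
  drawing the states of all potential horizontal bonds independently and keeping only those
  of G_N realises the conditional independence given N.\<close>

datatype idx = Range "nat \<Rightarrow> int" | Hbond "nat \<Rightarrow> int" nat | Vbond "nat \<Rightarrow> int" nat

definition index_set :: "nat \<Rightarrow> idx set" where
  "index_set d = {Range x | x. x \<in> vertices d}
     \<union> {Hbond x n | x n. x \<in> vertices d \<and> 1 \<le> n}
     \<union> {Vbond x i | x i. x \<in> vertices d \<and> 1 \<le> i \<and> i < d}"

definition bond_pmf :: "real \<Rightarrow> nat pmf" where
  "bond_pmf r = map_pmf (\<lambda>b. if b then 1 else 0) (bernoulli_pmf r)"

definition coord_pmf :: "nat pmf \<Rightarrow> real \<Rightarrow> real \<Rightarrow> idx \<Rightarrow> nat pmf" where
  "coord_pmf N p q i = (case i of Range _ \<Rightarrow> N | Hbond _ _ \<Rightarrow> bond_pmf p | Vbond _ _ \<Rightarrow> bond_pmf q)"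

definition APRR :: "nat \<Rightarrow> nat pmf \<Rightarrow> real \<Rightarrow> real \<Rightarrow> (idx \<Rightarrow> nat) measure" where
  "APRR d N p q = PiM (index_set d) (\<lambda>i. measure_pmf (coord_pmf N p q i))"

definition open_bond :: "nat \<Rightarrow> (idx \<Rightarrow> nat) \<Rightarrow> (nat \<Rightarrow> int) \<Rightarrow> (nat \<Rightarrow> int) \<Rightarrow> bool" where
  "open_bond d w x y \<longleftrightarrow> x \<in> vertices d \<and>
     ((\<exists>n. 1 \<le> n \<and> n \<le> w (Range x) \<and> w (Hbond x n) = 1 \<and> y = shift x 0 (int n)) \<or>
      (\<exists>i. 1 \<le> i \<and> i < d \<and> w (Vbond x i) = 1 \<and> y = shift x i 1))"

definition perc_event :: "nat \<Rightarrow> (idx \<Rightarrow> nat) set" where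
  "perc_event d = {w. infinite {y. (open_bond d w)\<^sup>*\<^sup>* origin y}}"

definition theta :: "nat \<Rightarrow> nat pmf \<Rightarrow> real \<Rightarrow> real \<Rightarrow> real" where
  "theta d N p q = measure (APRR d N p q) (perc_event d \<inter> space (APRR d N p q))"

end

theory Submission
  imports Defs
begin

text \<open>Every vertex reachable from the origin is the endpoint of a skeleton: covered horizontal
  stretches, in the sense of \<open>covered\<close> below, joined by \<open>k\<close> open vertical bonds.  The expected
  number of skeletons with \<open>k\<close> vertical steps factorises by independence and is at most
  \<open>G ((d-1) q G)\<^sup>k\<close>, where \<open>G = \<Sum>\<^sub>t P(the segment [0, t e\<^sub>1] is covered)\<close> does not depend
  on \<open>q\<close>.  A renewal argument at the last cut point bounds \<open>G\<close>: the events
  "no bond jumps over \<open>s\<close> and \<open>[s, n]\<close> is covered" are disjoint in \<open>s \<le> n\<close>, and a cut at \<open>s\<close>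
  has probability at least a constant \<open>c > 0\<close>, because \<open>\<Sum>\<^sub>m P(N > m) = E N < \<infinity>\<close>.  Hence
  \<open>G \<le> 1/c\<close>, and for \<open>q\<close> so small that \<open>(d-1) q G \<le> 1/2\<close> the expected number of reachable
  vertices is finite, so the open cluster of the origin is almost surely finite.\<close>

section \<open>Independence of functions of disjoint coordinates\<close>

lemma (in prob_space) indep_var_nn_integral:
  assumes "indep_var borel X borel Y"
  shows "(\<integral>\<^sup>+\<omega>. X \<omega> * Y \<omega> \<partial>M) = (\<integral>\<^sup>+\<omega>. X \<omega> \<partial>M) * (\<integral>\<^sup>+\<omega>. Y \<omega> \<partial>M)"
proof -
  have "case_bool borel borel = (\<lambda>_. borel :: ennreal measure)"
    by (rule ext) (simp split: bool.split)
  then have "indep_vars (\<lambda>_. borel) (case_bool X Y) UNIV"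
    using assms by (simp add: indep_var_def)
  then have "(\<integral>\<^sup>+\<omega>. (\<Prod>b\<in>UNIV. case_bool X Y b \<omega>) \<partial>M) = (\<Prod>b\<in>UNIV. \<integral>\<^sup>+\<omega>. case_bool X Y b \<omega> \<partial>M)"
    by (intro indep_vars_nn_integral) auto
  then show ?thesis
    by (simp add: UNIV_bool mult.commute)
qed

lemma (in product_prob_space) indep_vars_coordinates:
  assumes "I \<noteq> {}"
  shows "P.indep_vars M (\<lambda>i \<omega>. \<omega> i) I"
proof (subst P.indep_vars_iff_distr_eq_PiM')
  have "distr (PiM I M) (PiM I M) (\<lambda>\<omega>. \<lambda>i\<in>I. \<omega> i) = distr (PiM I M) (PiM I M) (\<lambda>\<omega>. \<omega>)"
    by (rule distr_cong) (auto simp: space_PiM PiE_def extensional_restrict)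
  also have "\<dots> = (\<Pi>\<^sub>M i\<in>I. distr (PiM I M) (M i) (\<lambda>\<omega>. \<omega> i))"
    by (simp add: PiM_component cong: PiM_cong)
  finally show "distr (PiM I M) (PiM I M) (\<lambda>\<omega>. \<lambda>i\<in>I. \<omega> i) = (\<Pi>\<^sub>M i\<in>I. distr (PiM I M) (M i) (\<lambda>\<omega>. \<omega> i))" .
qed (use assms in auto)

lemma (in product_prob_space) factor_through_restrict:
  assumes C: "C \<subseteq> I" and f: "f \<in> measurable (PiM I M) N"
    and local: "\<And>\<omega> \<omega>'. \<omega> \<in> space (PiM I M) \<Longrightarrow> \<omega>' \<in> space (PiM I M) \<Longrightarrow> (\<forall>i\<in>C. \<omega> i = \<omega>' i) \<Longrightarrow> f \<omega> = f \<omega>'"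
  obtains F where "F \<in> measurable (PiM C M) N" "\<And>\<omega>. \<omega> \<in> space (PiM I M) \<Longrightarrow> f \<omega> = F (restrict \<omega> C)"
proof -
  obtain \<omega>0 where \<omega>0: "\<omega>0 \<in> space (PiM I M)"
    using P.not_empty by blast
  define ext where "ext u = (\<lambda>i. if i \<in> C then u i else \<omega>0 i)" for u
  have ext_space: "ext u \<in> space (PiM I M)" if "u \<in> space (PiM C M)" for u
    using that \<omega>0 C unfolding ext_def space_PiM by (auto simp: PiE_def Pi_def extensional_def)
  have "ext \<in> measurable (PiM C M) (PiM I M)"
  proof (rule measurable_PiM_single')
    fix i assume "i \<in> I"
    then show "(\<lambda>u. ext u i) \<in> measurable (PiM C M) (M i)"
      using \<omega>0 by (cases "i \<in> C") (auto simp: ext_def space_PiM PiE_iff)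
  qed (use ext_space in \<open>auto simp: space_PiM\<close>)
  then have "f \<circ> ext \<in> measurable (PiM C M) N"
    using f by (rule measurable_comp)
  moreover have "f \<omega> = (f \<circ> ext) (restrict \<omega> C)" if "\<omega> \<in> space (PiM I M)" for \<omega>
    unfolding comp_apply using C that by (intro local ext_space) (auto simp: ext_def space_PiM)
  ultimately show ?thesis
    by (rule that)
qed

lemma (in product_prob_space) nn_integral_mult_disjoint_coordinates:
  assumes C: "C1 \<subseteq> I" "C2 \<subseteq> I" "C1 \<inter> C2 = {}" "I \<noteq> {}"
    and f: "f \<in> borel_measurable (PiM I M)" and g: "g \<in> borel_measurable (PiM I M)"
    and f_local: "\<And>\<omega> \<omega>'. \<omega> \<in> space (PiM I M) \<Longrightarrow> \<omega>' \<in> space (PiM I M) \<Longrightarrow> (\<forall>i\<in>C1. \<omega> i = \<omega>' i) \<Longrightarrow> f \<omega> = f \<omega>'"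
    and g_local: "\<And>\<omega> \<omega>'. \<omega> \<in> space (PiM I M) \<Longrightarrow> \<omega>' \<in> space (PiM I M) \<Longrightarrow> (\<forall>i\<in>C2. \<omega> i = \<omega>' i) \<Longrightarrow> g \<omega> = g \<omega>'"
  shows "(\<integral>\<^sup>+\<omega>. f \<omega> * g \<omega> \<partial>PiM I M) = (\<integral>\<^sup>+\<omega>. f \<omega> \<partial>PiM I M) * (\<integral>\<^sup>+\<omega>. g \<omega> \<partial>PiM I M)"
proof -
  obtain F where F: "F \<in> borel_measurable (PiM C1 M)" and f_eq: "\<And>\<omega>. \<omega> \<in> space (PiM I M) \<Longrightarrow> f \<omega> = F (restrict \<omega> C1)"
    using factor_through_restrict[OF C(1) f f_local] by blast
  obtain G where G: "G \<in> borel_measurable (PiM C2 M)" and g_eq: "\<And>\<omega>. \<omega> \<in> space (PiM I M) \<Longrightarrow> g \<omega> = G (restrict \<omega> C2)"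
    using factor_through_restrict[OF C(2) g g_local] by blast
  have "P.indep_var (PiM C1 M) (\<lambda>\<omega>. restrict \<omega> C1) (PiM C2 M) (\<lambda>\<omega>. restrict \<omega> C2)"
    using P.indep_var_restrict[OF indep_vars_coordinates[OF C(4)] C(3,1,2)] by simp
  then have indep: "P.indep_var borel (F \<circ> (\<lambda>\<omega>. restrict \<omega> C1)) borel (G \<circ> (\<lambda>\<omega>. restrict \<omega> C2))"
    using F G by (rule P.indep_var_compose)
  have "(\<integral>\<^sup>+\<omega>. f \<omega> * g \<omega> \<partial>PiM I M) = (\<integral>\<^sup>+\<omega>. (F \<circ> (\<lambda>\<omega>. restrict \<omega> C1)) \<omega> * (G \<circ> (\<lambda>\<omega>. restrict \<omega> C2)) \<omega> \<partial>PiM I M)"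
    by (rule nn_integral_cong) (simp add: f_eq g_eq)
  also have "\<dots> = (\<integral>\<^sup>+\<omega>. (F \<circ> (\<lambda>\<omega>. restrict \<omega> C1)) \<omega> \<partial>PiM I M) * (\<integral>\<^sup>+\<omega>. (G \<circ> (\<lambda>\<omega>. restrict \<omega> C2)) \<omega> \<partial>PiM I M)"
    using indep by (rule P.indep_var_nn_integral)
  also have "\<dots> = (\<integral>\<^sup>+\<omega>. f \<omega> \<partial>PiM I M) * (\<integral>\<^sup>+\<omega>. g \<omega> \<partial>PiM I M)"
    by (intro arg_cong2[where f = "(*)"] nn_integral_cong) (simp_all add: f_eq g_eq)
  finally show ?thesis .
qed

lemma nn_integral_indicator_pred:
  assumes "Measurable.pred M P"
  shows "(\<integral>\<^sup>+\<omega>. (if P \<omega> then 1 else 0) \<partial>M) = emeasure M {\<omega>\<in>space M. P \<omega>}"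
proof -
  have "(\<integral>\<^sup>+\<omega>. (if P \<omega> then 1 else 0) \<partial>M) = (\<integral>\<^sup>+\<omega>. indicator {\<omega>\<in>space M. P \<omega>} \<omega> \<partial>M)"
    by (rule nn_integral_cong) (auto simp: indicator_def)
  also have "\<dots> = emeasure M {\<omega>\<in>space M. P \<omega>}"
    using assms by (intro nn_integral_indicator) auto
  finally show ?thesis .
qed

lemma emeasure_Collect_conj_eq_nn_integral:
  assumes "Measurable.pred M P" "Measurable.pred M Q"
  shows "emeasure M {\<omega>\<in>space M. P \<omega> \<and> Q \<omega>} = (\<integral>\<^sup>+\<omega>. (if P \<omega> then 1 else 0) * (if Q \<omega> then 1 else 0) \<partial>M)"
proof -
  have "emeasure M {\<omega>\<in>space M. P \<omega> \<and> Q \<omega>} = (\<integral>\<^sup>+\<omega>. (if P \<omega> \<and> Q \<omega> then 1 else 0) \<partial>M)"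
    using assms by (subst nn_integral_indicator_pred) auto
  also have "\<dots> = (\<integral>\<^sup>+\<omega>. (if P \<omega> then 1 else 0) * (if Q \<omega> then 1 else 0) \<partial>M)"
    by (rule nn_integral_cong) auto
  finally show ?thesis .
qed

section \<open>Covered segments and skeletons\<close>

definition hpoint :: "(nat \<Rightarrow> int) \<Rightarrow> nat \<Rightarrow> (nat \<Rightarrow> int)" where
  "hpoint a i = shift a 0 (int i)"

definition vpoint :: "(nat \<Rightarrow> int) \<Rightarrow> nat \<Rightarrow> nat \<Rightarrow> (nat \<Rightarrow> int)" where
  "vpoint a t i = shift (hpoint a t) i 1"

definition long_jump :: "(idx \<Rightarrow> nat) \<Rightarrow> (nat \<Rightarrow> int) \<Rightarrow> nat \<Rightarrow> bool" where
  "long_jump w z m \<longleftrightarrow> (\<exists>n. m < n \<and> n \<le> w (Range z) \<and> w (Hbond z n) = 1)"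

text \<open>Every unit step from \<open>a + j e\<^sub>1\<close> to \<open>a + (j+1) e\<^sub>1\<close>, \<open>j < t\<close>, is overarched by an open
  horizontal bond starting in \<open>a, \<dots>, a + j e\<^sub>1\<close>.  This is necessary for \<open>a + t e\<^sub>1\<close> to be
  reachable from \<open>a\<close> by horizontal bonds, and it depends only on the states at \<open>a + i e\<^sub>1\<close>, \<open>i \<ge> 0\<close>.\<close>

definition covered :: "(idx \<Rightarrow> nat) \<Rightarrow> (nat \<Rightarrow> int) \<Rightarrow> nat \<Rightarrow> bool" where
  "covered w a t \<longleftrightarrow> (\<forall>j<t. \<exists>i\<le>j. long_jump w (hpoint a i) (j - i))"

fun covered_endpoints :: "nat \<Rightarrow> (idx \<Rightarrow> nat) \<Rightarrow> (nat \<Rightarrow> int) \<Rightarrow> nat \<Rightarrow> (nat \<Rightarrow> int) set" where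
  "covered_endpoints d w x 0 = (\<Union>t. if covered w x t then {hpoint x t} else {})"
| "covered_endpoints d w x (Suc k) = (\<Union>t. \<Union>i\<in>{1..<d}.
     if covered w x t \<and> w (Vbond (hpoint x t) i) = 1 then covered_endpoints d w (vpoint x t i) k else {})"

fun covered_paths :: "nat \<Rightarrow> (idx \<Rightarrow> nat) \<Rightarrow> (nat \<Rightarrow> int) \<Rightarrow> nat \<Rightarrow> ennreal" where
  "covered_paths d w x 0 = (\<Sum>t. if covered w x t then 1 else 0)"
| "covered_paths d w x (Suc k) = (\<Sum>t. \<Sum>i\<in>{1..<d}.
     (if covered w x t \<and> w (Vbond (hpoint x t) i) = 1 then 1 else 0) * covered_paths d w (vpoint x t i) k)"

lemma shift_zero [simp]: "shift x i 0 = x"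
  by (simp add: shift_def fun_eq_iff)

lemma hpoint_0 [simp]: "hpoint x 0 = x"
  by (simp add: hpoint_def)

lemma hpoint_hpoint [simp]: "hpoint (hpoint x n) t = hpoint x (n + t)"
  by (auto simp: hpoint_def shift_def fun_eq_iff)

lemma hpoint_inj: "hpoint a i = hpoint a j \<Longrightarrow> i = j"
  by (auto simp: hpoint_def shift_def fun_eq_iff dest: spec[of _ 0])

lemma covered_0 [simp]: "covered w x 0"
  by (simp add: covered_def)

lemma covered_after_jump:
  assumes "1 \<le> n" "n \<le> w (Range x)" "w (Hbond x n) = 1" "covered w (hpoint x n) t"
  shows "covered w x (n + t)"
  unfolding covered_def
proof (intro allI impI)
  fix j assume j: "j < n + t"
  show "\<exists>i\<le>j. long_jump w (hpoint x i) (j - i)"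
  proof (cases "j < n")
    case True
    then show ?thesis
      using assms by (intro exI[of _ 0]) (auto simp: long_jump_def)
  next
    case False
    with j assms(4) obtain i where "i \<le> j - n" "long_jump w (hpoint (hpoint x n) i) (j - n - i)"
      unfolding covered_def by (metis less_diff_conv2 not_less add.commute)
    then show ?thesis
      using False by (intro exI[of _ "n + i"]) auto
  qed
qed

lemma covered_endpoints_after_jump:
  assumes "1 \<le> n" "n \<le> w (Range x)" "w (Hbond x n) = 1"
  shows "covered_endpoints d w (hpoint x n) k \<subseteq> covered_endpoints d w x k"
proof (cases k)
  case 0
  then show ?thesis
    using covered_after_jump[OF assms] by (auto split: if_splits intro!: exI[of _ "n + _"])
next
  case (Suc k')
  show ?thesis
  proof
    fix y assume "y \<in> covered_endpoints d w (hpoint x n) k"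
    then obtain t i where "i \<in> {1..<d}" "covered w (hpoint x n) t" "w (Vbond (hpoint x (n + t)) i) = 1"
        "y \<in> covered_endpoints d w (vpoint x (n + t) i) k'"
      using Suc by (auto simp: vpoint_def split: if_splits)
    then show "y \<in> covered_endpoints d w x k"
      using Suc covered_after_jump[OF assms] by (auto intro!: exI[of _ "n + t"] bexI[of _ i])
  qed
qed

lemma reachable_in_covered_endpoints:
  assumes "(open_bond d w)\<^sup>*\<^sup>* x y"
  shows "\<exists>k. y \<in> covered_endpoints d w x k"
  using assms
proof (induction rule: converse_rtranclp_induct)
  case base
  show ?case
    by (intro exI[of _ 0]) (auto intro!: exI[of _ 0])
next
  case (step x z)
  then obtain k where k: "y \<in> covered_endpoints d w z k"
    by blast
  from step(1) consider
      (horizontal) n where "1 \<le> n" "n \<le> w (Range x)" "w (Hbond x n) = 1" "z = hpoint x n"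
    | (vertical) i where "1 \<le> i" "i < d" "w (Vbond x i) = 1" "z = vpoint x 0 i"
    unfolding open_bond_def hpoint_def vpoint_def by auto
  then show ?case
  proof cases
    case horizontal
    then show ?thesis
      using covered_endpoints_after_jump[OF horizontal(1-3)] k by blast
  next
    case vertical
    then show ?thesis
      using k by (intro exI[of _ "Suc k"]) (auto intro!: exI[of _ 0] bexI[of _ i])
  qed
qed

lemma card_covered_endpoints_le:
  "emeasure (count_space UNIV) (covered_endpoints d w x k) \<le> covered_paths d w x k"
proof (induction k arbitrary: x)
  case 0
  have "emeasure (count_space UNIV) (covered_endpoints d w x 0)
      \<le> (\<Sum>t. emeasure (count_space UNIV) (if covered w x t then {hpoint x t} else {}))"
    by (simp only: covered_endpoints.simps, rule emeasure_subadditive_countably) auto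
  also have "\<dots> = covered_paths d w x 0"
    by (simp add: if_distrib emeasure_count_space_finite cong: if_cong)
  finally show ?case .
next
  case (Suc k)
  let ?A = "\<lambda>t i. if covered w x t \<and> w (Vbond (hpoint x t) i) = 1 then covered_endpoints d w (vpoint x t i) k else {}"
  have "emeasure (count_space UNIV) (covered_endpoints d w x (Suc k))
      \<le> (\<Sum>t. emeasure (count_space UNIV) (\<Union>i\<in>{1..<d}. ?A t i))"
    by (simp only: covered_endpoints.simps, rule emeasure_subadditive_countably) auto
  also have "\<dots> \<le> (\<Sum>t. \<Sum>i\<in>{1..<d}. emeasure (count_space UNIV) (?A t i))"
    by (intro suminf_le summableI emeasure_subadditive_finite) auto
  also have "\<dots> \<le> covered_paths d w x (Suc k)"
    unfolding covered_paths.simps by (intro suminf_le summableI sum_mono) (use Suc in auto)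
  finally show ?case .
qed

abbreviation aprr_factor :: "nat pmf \<Rightarrow> real \<Rightarrow> real \<Rightarrow> idx \<Rightarrow> nat measure" where
  "aprr_factor N p q i \<equiv> measure_pmf (coord_pmf N p q i)"

lemma product_prob_space_aprr_factor: "product_prob_space (aprr_factor N p q)"
  by (simp add: product_prob_space_def product_prob_space_axioms_def product_sigma_finite_def
      prob_space_measure_pmf prob_space_imp_sigma_finite)

lemma prob_space_APRR: "prob_space (APRR d N p q)"
proof -
  interpret product_prob_space "aprr_factor N p q" "index_set d"
    by (rule product_prob_space_aprr_factor)
  show ?thesis
    unfolding APRR_def by unfold_locales
qed

lemma space_APRR: "space (APRR d N p q) = (\<Pi>\<^sub>E i\<in>index_set d. UNIV)"
  by (simp add: APRR_def space_PiM)

lemma origin_in_vertices: "origin \<in> vertices d"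
  by (simp add: vertices_def origin_def)

lemma index_set_nonempty: "index_set d \<noteq> {}"
  using origin_in_vertices by (auto simp: index_set_def)

lemma APRR_agree:
  assumes "w \<in> space (APRR d N p q)" "w' \<in> space (APRR d N p q)" "\<forall>i\<in>C. w i = w' i"
    and "i \<in> C \<or> i \<notin> index_set d"
  shows "w i = w' i"
  using assms by (auto simp: space_APRR PiE_def extensional_def)

lemma measurable_APRR_component [measurable]:
  "(\<lambda>w. w i) \<in> measurable (APRR d N p q) (count_space UNIV)"
proof (cases "i \<in> index_set d")
  case True
  have "(\<lambda>w. w i) \<in> measurable (APRR d N p q) (aprr_factor N p q i)"
    unfolding APRR_def using True by (rule measurable_component_singleton)
  then show ?thesis
    by (simp cong: measurable_cong_sets)
next
  case False
  have "(\<lambda>w. undefined) \<in> measurable (APRR d N p q) (count_space UNIV)"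
    by simp
  then show ?thesis
    by (rule measurable_cong[THEN iffD1, rotated])
      (use False in \<open>auto simp: space_APRR PiE_def extensional_def\<close>)
qed

lemma long_jump_measurable [measurable]: "Measurable.pred (APRR d N p q) (\<lambda>w. long_jump w z m)"
  unfolding long_jump_def by measurable

lemma covered_measurable [measurable]: "Measurable.pred (APRR d N p q) (\<lambda>w. covered w a t)"
  unfolding covered_def by measurable

lemma covered_paths_measurable [measurable]:
  "(\<lambda>w. covered_paths d w x k) \<in> borel_measurable (APRR d' N p q)"
  by (induction k arbitrary: x) simp_all

lemma nn_integral_APRR_mult_indep:
  assumes C: "C1 \<subseteq> index_set d" "C2 \<subseteq> index_set d" "C1 \<inter> C2 = {}"
    and f: "f \<in> borel_measurable (APRR d N p q)" and g: "g \<in> borel_measurable (APRR d N p q)"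
    and f_local: "\<And>w w'. w \<in> space (APRR d N p q) \<Longrightarrow> w' \<in> space (APRR d N p q) \<Longrightarrow> (\<forall>i\<in>C1. w i = w' i) \<Longrightarrow> f w = f w'"
    and g_local: "\<And>w w'. w \<in> space (APRR d N p q) \<Longrightarrow> w' \<in> space (APRR d N p q) \<Longrightarrow> (\<forall>i\<in>C2. w i = w' i) \<Longrightarrow> g w = g w'"
  shows "(\<integral>\<^sup>+w. f w * g w \<partial>APRR d N p q) = (\<integral>\<^sup>+w. f w \<partial>APRR d N p q) * (\<integral>\<^sup>+w. g w \<partial>APRR d N p q)"
proof -
  interpret product_prob_space "aprr_factor N p q" "index_set d"
    by (rule product_prob_space_aprr_factor)
  show ?thesis
    using nn_integral_mult_disjoint_coordinates[OF C index_set_nonempty, of f g] f g f_local g_local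
    unfolding APRR_def by blast
qed

lemma emeasure_APRR_conj_indep:
  assumes C: "C1 \<subseteq> index_set d" "C2 \<subseteq> index_set d" "C1 \<inter> C2 = {}"
    and [measurable]: "Measurable.pred (APRR d N p q) P" "Measurable.pred (APRR d N p q) Q"
    and P_local: "\<And>w w'. w \<in> space (APRR d N p q) \<Longrightarrow> w' \<in> space (APRR d N p q) \<Longrightarrow> (\<forall>i\<in>C1. w i = w' i) \<Longrightarrow> P w = P w'"
    and Q_local: "\<And>w w'. w \<in> space (APRR d N p q) \<Longrightarrow> w' \<in> space (APRR d N p q) \<Longrightarrow> (\<forall>i\<in>C2. w i = w' i) \<Longrightarrow> Q w = Q w'"
  shows "emeasure (APRR d N p q) {w\<in>space (APRR d N p q). P w \<and> Q w}
       = emeasure (APRR d N p q) {w\<in>space (APRR d N p q). P w} * emeasure (APRR d N p q) {w\<in>space (APRR d N p q). Q w}"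
proof -
  have "emeasure (APRR d N p q) {w\<in>space (APRR d N p q). P w \<and> Q w}
      = (\<integral>\<^sup>+w. (if P w then 1 else 0) \<partial>APRR d N p q) * (\<integral>\<^sup>+w. (if Q w then 1 else 0) \<partial>APRR d N p q)"
    unfolding emeasure_Collect_conj_eq_nn_integral[OF assms(4,5)]
    by (rule nn_integral_APRR_mult_indep[OF C]) (auto dest: P_local Q_local)
  then show ?thesis
    by (simp add: nn_integral_indicator_pred)
qed

lemma emeasure_bond_pmf:
  assumes "0 \<le> r" "r \<le> 1"
  shows "emeasure (measure_pmf (bond_pmf r)) {1} = ennreal r"
    and "emeasure (measure_pmf (bond_pmf r)) {0} = ennreal (1 - r)"
proof -
  have "{b. b} = {True}" "{b. \<not> b} = {False}"
    by auto
  then show "emeasure (measure_pmf (bond_pmf r)) {1} = ennreal r"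
    and "emeasure (measure_pmf (bond_pmf r)) {0} = ennreal (1 - r)"
    using assms by (simp_all add: bond_pmf_def emeasure_pmf_single pmf_map measure_pmf_single vimage_def)
qed

lemma emeasure_Vbond_open:
  assumes "z \<in> vertices d" "1 \<le> i" "i < d" "0 \<le> q" "q \<le> 1"
  shows "emeasure (APRR d N p q) {w\<in>space (APRR d N p q). w (Vbond z i) = 1} = ennreal q"
proof -
  interpret product_prob_space "aprr_factor N p q" "index_set d"
    by (rule product_prob_space_aprr_factor)
  have "Vbond z i \<in> index_set d"
    using assms by (auto simp: index_set_def)
  then have "emeasure (APRR d N p q) {w\<in>space (APRR d N p q). w (Vbond z i) \<in> {1}}
      = emeasure (aprr_factor N p q (Vbond z i)) {1}"
    unfolding APRR_def by (intro emeasure_PiM_Collect_single) auto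
  then show ?thesis
    using assms emeasure_bond_pmf(1)[of q] by (simp add: coord_pmf_def)
qed

definition height :: "nat \<Rightarrow> (nat \<Rightarrow> int) \<Rightarrow> int" where
  "height d v = (\<Sum>j\<in>{1..<d}. v j)"

fun idx_vertex :: "idx \<Rightarrow> nat \<Rightarrow> int" where
  "idx_vertex (Range x) = x"
| "idx_vertex (Hbond x n) = x"
| "idx_vertex (Vbond x i) = x"

lemma shift_in_vertices: "x \<in> vertices d \<Longrightarrow> i < d \<Longrightarrow> shift x i n \<in> vertices d"
  by (auto simp: vertices_def shift_def)

lemma hpoint_in_vertices: "x \<in> vertices d \<Longrightarrow> 0 < d \<Longrightarrow> hpoint x t \<in> vertices d"
  by (simp add: hpoint_def shift_in_vertices)

lemma vpoint_in_vertices: "x \<in> vertices d \<Longrightarrow> i < d \<Longrightarrow> vpoint x t i \<in> vertices d"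
  by (simp add: vpoint_def shift_in_vertices hpoint_in_vertices)

lemma height_hpoint [simp]: "height d (hpoint x t) = height d x"
  unfolding height_def hpoint_def shift_def by (intro sum.cong) auto

lemma height_vpoint:
  assumes "1 \<le> i" "i < d"
  shows "height d (vpoint x t i) = height d x + 1"
proof -
  have "height d (vpoint x t i) = (\<Sum>j\<in>{1..<d}. hpoint x t j + (if j = i then 1 else 0))"
    unfolding height_def vpoint_def shift_def by (intro sum.cong) auto
  also have "\<dots> = height d (hpoint x t) + 1"
    using assms by (simp add: sum.distrib height_def)
  finally show ?thesis
    by simp
qed

lemma long_jump_cong:
  "w (Range z) = w' (Range z) \<Longrightarrow> (\<And>n. w (Hbond z n) = w' (Hbond z n)) \<Longrightarrow> long_jump w z m = long_jump w' z m"
  by (simp add: long_jump_def)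

lemma covered_cong:
  "(\<And>i. w (Range (hpoint a i)) = w' (Range (hpoint a i))) \<Longrightarrow>
   (\<And>i n. w (Hbond (hpoint a i) n) = w' (Hbond (hpoint a i) n)) \<Longrightarrow> covered w a t = covered w' a t"
  unfolding covered_def using long_jump_cong by metis

lemma covered_paths_cong:
  "(\<And>j. height d (idx_vertex j) \<ge> height d x \<Longrightarrow> w j = w' j) \<Longrightarrow> covered_paths d w x k = covered_paths d w' x k"
proof (induction k arbitrary: x)
  case 0
  then show ?case
    by (simp add: covered_cong[of w x w'])
next
  case (Suc k)
  have "covered_paths d w (vpoint x t i) k = covered_paths d w' (vpoint x t i) k" if "i \<in> {1..<d}" for t i
    using that height_vpoint[of i d x t] by (intro Suc.IH Suc.prems) auto
  moreover have "covered w x t = covered w' x t" "w (Vbond (hpoint x t) i) = w' (Vbond (hpoint x t) i)" for t i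
    by (auto intro!: covered_cong Suc.prems)
  ultimately show ?case
    unfolding covered_paths.simps by (intro arg_cong[where f = suminf] ext sum.cong) simp_all
qed

definition hline_coords :: "nat \<Rightarrow> (nat \<Rightarrow> int) \<Rightarrow> nat set \<Rightarrow> idx set" where
  "hline_coords d a S = {j \<in> index_set d. \<exists>i\<in>S. j = Range (hpoint a i) \<or> (\<exists>n. j = Hbond (hpoint a i) n)}"

lemma long_jump_APRR_cong:
  assumes w: "w \<in> space (APRR d N p q)" "w' \<in> space (APRR d N p q)" "\<forall>j\<in>C. w j = w' j"
    and "hline_coords d a {i} \<subseteq> C"
  shows "long_jump w (hpoint a i) m = long_jump w' (hpoint a i) m"
  by (rule long_jump_cong; rule APRR_agree[OF w]) (use assms(4) in \<open>auto simp: hline_coords_def\<close>)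

definition vtranslate :: "(nat \<Rightarrow> int) \<Rightarrow> (nat \<Rightarrow> int) \<Rightarrow> (nat \<Rightarrow> int)" where
  "vtranslate a x = (\<lambda>j. x j + a j)"

fun translate_idx :: "(nat \<Rightarrow> int) \<Rightarrow> idx \<Rightarrow> idx" where
  "translate_idx a (Range x) = Range (vtranslate a x)"
| "translate_idx a (Hbond x n) = Hbond (vtranslate a x) n"
| "translate_idx a (Vbond x i) = Vbond (vtranslate a x) i"

lemma translate_idx_in_index_set:
  "a \<in> vertices d \<Longrightarrow> i \<in> index_set d \<Longrightarrow> translate_idx a i \<in> index_set d"
  by (auto simp: index_set_def vertices_def vtranslate_def)

lemma inj_translate_idx: "inj (translate_idx a)"
proof (rule injI)
  fix i j assume "translate_idx a i = translate_idx a j"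
  moreover have "inj (vtranslate a)"
    by (auto simp: inj_def vtranslate_def fun_eq_iff)
  ultimately show "i = j"
    by (cases i; cases j) (auto simp: inj_def)
qed

lemma coord_pmf_translate_idx [simp]: "coord_pmf N p q (translate_idx a i) = coord_pmf N p q i"
  by (cases i) (auto simp: coord_pmf_def)

lemma vtranslate_hpoint_origin: "vtranslate a (hpoint origin j) = hpoint a j"
  by (auto simp: vtranslate_def hpoint_def shift_def origin_def fun_eq_iff)

lemma emeasure_covered_translate:
  assumes a: "a \<in> vertices d" and d: "0 < d"
  shows "emeasure (APRR d N p q) {w\<in>space (APRR d N p q). covered w a t}
       = emeasure (APRR d N p q) {w\<in>space (APRR d N p q). covered w origin t}"
proof -
  let ?O = "APRR d N p q"
  define T where "T = (\<lambda>w. \<lambda>j\<in>index_set d. w (translate_idx a j) :: nat)"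
  have T: "T \<in> measurable ?O ?O"
    unfolding T_def APRR_def
  proof (rule measurable_restrict)
    fix j assume "j \<in> index_set d"
    then have "(\<lambda>w. w (translate_idx a j)) \<in> measurable ?O (aprr_factor N p q (translate_idx a j))"
      unfolding APRR_def using translate_idx_in_index_set[OF a]
      by (intro measurable_component_singleton) auto
    then show "(\<lambda>w. w (translate_idx a j)) \<in> measurable (PiM (index_set d) (aprr_factor N p q)) (aprr_factor N p q j)"
      by (simp add: APRR_def)
  qed
  have distr_T: "distr ?O ?O T = ?O"
    using distr_PiM_reindex[of "index_set d" "aprr_factor N p q" "translate_idx a" "index_set d"]
      inj_translate_idx[of a] translate_idx_in_index_set[OF a]
    unfolding T_def by (auto simp: APRR_def prob_space_measure_pmf inj_on_def inj_def)
  have "covered (T w) origin t = covered w a t" if "w \<in> space ?O" for w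
  proof -
    have "Range (hpoint origin j) \<in> index_set d" "Hbond (hpoint origin j) n \<in> index_set d" if "1 \<le> n" for j n
      using hpoint_in_vertices[OF origin_in_vertices d] that by (auto simp: index_set_def)
    then have "long_jump (T w) (hpoint origin i) m = long_jump w (hpoint a i) m" for i m
      by (auto simp: long_jump_def T_def vtranslate_hpoint_origin)
    then show ?thesis
      by (simp add: covered_def)
  qed
  then have "{w\<in>space ?O. covered w a t} = T -` {w\<in>space ?O. covered w origin t} \<inter> space ?O"
    using measurable_space[OF T] by auto
  then have "emeasure ?O {w\<in>space ?O. covered w a t} = emeasure (distr ?O ?O T) {w\<in>space ?O. covered w origin t}"
    by (simp add: emeasure_distr[OF T])
  then show ?thesis
    by (simp add: distr_T)
qed

section \<open>Expected number of skeletons\<close>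

definition cover_prob :: "nat \<Rightarrow> nat pmf \<Rightarrow> real \<Rightarrow> real \<Rightarrow> nat \<Rightarrow> ennreal" where
  "cover_prob d N p q t = emeasure (APRR d N p q) {w\<in>space (APRR d N p q). covered w origin t}"

lemma nn_integral_covered:
  assumes "x \<in> vertices d" "0 < d"
  shows "(\<integral>\<^sup>+w. (if covered w x t then 1 else 0) \<partial>APRR d N p q) = cover_prob d N p q t"
  by (simp add: nn_integral_indicator_pred cover_prob_def emeasure_covered_translate[OF assms])

text \<open>The three factors depend on disjoint sets of coordinates: the horizontal line through \<open>x\<close>,
  one vertical bond on it, and the half-space above it.\<close>

lemma nn_integral_covered_vstep:
  assumes x: "x \<in> vertices d" and i: "i \<in> {1..<d}" and q: "0 \<le> q" "q \<le> 1"
  shows "(\<integral>\<^sup>+w. (if covered w x t \<and> w (Vbond (hpoint x t) i) = 1 then 1 else 0) * covered_paths d w (vpoint x t i) k \<partial>APRR d N p q)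
       = cover_prob d N p q t * (ennreal q * (\<integral>\<^sup>+w. covered_paths d w (vpoint x t i) k \<partial>APRR d N p q))"
    (is "?lhs = _")
proof -
  let ?O = "APRR d N p q"
  let ?line = "hline_coords d x UNIV"
  let ?V = "\<lambda>w. if w (Vbond (hpoint x t) i) = 1 then 1 else 0 :: ennreal"
  let ?P = "\<lambda>w. covered_paths d w (vpoint x t i) k"
  have d: "0 < d"
    using i by simp
  have above: "height d x < height d (idx_vertex j)" if "height d (vpoint x t i) \<le> height d (idx_vertex j)" for j
    using that height_vpoint[of i d x t] i by simp
  have "?lhs = (\<integral>\<^sup>+w. (if covered w x t then 1 else 0) * (?V w * ?P w) \<partial>?O)"
    by (rule nn_integral_cong) simp
  also have "\<dots> = (\<integral>\<^sup>+w. (if covered w x t then 1 else 0) \<partial>?O) * (\<integral>\<^sup>+w. ?V w * ?P w \<partial>?O)"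
  proof (rule nn_integral_APRR_mult_indep[of ?line d "index_set d - ?line"])
    fix w w' assume w: "w \<in> space ?O" "w' \<in> space ?O" "\<forall>j\<in>?line. w j = w' j"
    have "covered w x t = covered w' x t"
      by (rule covered_cong; rule APRR_agree[OF w]) (auto simp: hline_coords_def)
    then show "(if covered w x t then 1 else 0) = (if covered w' x t then 1 else (0::ennreal))"
      by simp
  next
    fix w w' assume w: "w \<in> space ?O" "w' \<in> space ?O" "\<forall>j\<in>index_set d - ?line. w j = w' j"
    have "?P w = ?P w'"
      by (rule covered_paths_cong, rule APRR_agree[OF w]) (auto simp: hline_coords_def dest!: above)
    then show "?V w * ?P w = ?V w' * ?P w'"
      using APRR_agree[OF w, of "Vbond (hpoint x t) i"] by (simp add: hline_coords_def)
  qed (auto simp: hline_coords_def)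
  also have "(\<integral>\<^sup>+w. ?V w * ?P w \<partial>?O) = (\<integral>\<^sup>+w. ?V w \<partial>?O) * (\<integral>\<^sup>+w. ?P w \<partial>?O)"
  proof (rule nn_integral_APRR_mult_indep[of "{Vbond (hpoint x t) i}" d "index_set d - {Vbond (hpoint x t) i}"])
    fix w w' assume w: "w \<in> space ?O" "w' \<in> space ?O" "\<forall>j\<in>index_set d - {Vbond (hpoint x t) i}. w j = w' j"
    show "?P w = ?P w'"
      by (rule covered_paths_cong, rule APRR_agree[OF w]) (auto dest!: above)
  qed (use i hpoint_in_vertices[OF x d] in \<open>auto simp: index_set_def\<close>)
  also have "(\<integral>\<^sup>+w. ?V w \<partial>?O) = ennreal q"
    using i q emeasure_Vbond_open[OF hpoint_in_vertices[OF x d], of i q N p] by (simp add: nn_integral_indicator_pred)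
  finally show ?thesis
    using nn_integral_covered[OF x d] by (simp add: mult.assoc)
qed

lemma nn_integral_covered_paths_le:
  assumes x: "x \<in> vertices d" and d: "0 < d" and q: "0 \<le> q" "q \<le> 1"
  shows "(\<integral>\<^sup>+w. covered_paths d w x k \<partial>APRR d N p q)
     \<le> suminf (cover_prob d N p q) * (of_nat (d - 1) * ennreal q * suminf (cover_prob d N p q)) ^ k"
  using x
proof (induction k arbitrary: x)
  case 0
  then show ?case
    using d by (simp add: nn_integral_suminf nn_integral_covered)
next
  case (Suc k)
  let ?G = "suminf (cover_prob d N p q)"
  let ?B = "?G * (of_nat (d - 1) * ennreal q * ?G) ^ k"
  have "(\<integral>\<^sup>+w. covered_paths d w x (Suc k) \<partial>APRR d N p q)
      = (\<Sum>t. \<Sum>i\<in>{1..<d}. \<integral>\<^sup>+w. (if covered w x t \<and> w (Vbond (hpoint x t) i) = 1 then 1 else 0)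
            * covered_paths d w (vpoint x t i) k \<partial>APRR d N p q)"
    by (simp add: nn_integral_suminf nn_integral_sum)
  also have "\<dots> = (\<Sum>t. \<Sum>i\<in>{1..<d}. cover_prob d N p q t * (ennreal q * (\<integral>\<^sup>+w. covered_paths d w (vpoint x t i) k \<partial>APRR d N p q)))"
    using Suc.prems q by (intro arg_cong[where f = suminf] ext sum.cong nn_integral_covered_vstep) auto
  also have "\<dots> \<le> (\<Sum>t. \<Sum>i\<in>{1..<d}. cover_prob d N p q t * (ennreal q * ?B))"
  proof (intro suminf_le summableI sum_mono mult_left_mono)
    fix t i assume "i \<in> {1..<d}"
    then show "(\<integral>\<^sup>+w. covered_paths d w (vpoint x t i) k \<partial>APRR d N p q) \<le> ?B"
      using Suc vpoint_in_vertices by simp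
  qed simp_all
  also have "\<dots> = (\<Sum>t. (of_nat (d - 1) * ennreal q * ?B) * cover_prob d N p q t)"
    by (intro arg_cong[where f = suminf] ext) (simp add: ac_simps)
  also have "\<dots> = (of_nat (d - 1) * ennreal q * ?B) * ?G"
    by (rule ennreal_suminf_cmult)
  also have "\<dots> = ?G * (of_nat (d - 1) * ennreal q * ?G) ^ Suc k"
    by (simp only: power_Suc ac_simps)
  finally show ?case .
qed

section \<open>A renewal bound for covered segments\<close>

text \<open>Two lower bounds for the probability that no open horizontal bond longer than \<open>m\<close> leaves a
  given site: its range is at most \<open>m\<close>, or its range is at most \<open>M\<^sub>0\<close> and all bonds of length
  \<open>\<le> M\<^sub>0\<close> are closed.  The first tends to \<open>1\<close> summably fast when \<open>E N < \<infinity>\<close>, the second is a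
  positive constant when \<open>P(N \<le> M\<^sub>0) > 0\<close> and \<open>p < 1\<close>.\<close>

definition no_long_jump_lb :: "nat pmf \<Rightarrow> real \<Rightarrow> nat \<Rightarrow> nat \<Rightarrow> real" where
  "no_long_jump_lb N p M0 m = max (measure_pmf.prob N {..m}) (measure_pmf.prob N {..M0} * (1 - p) ^ M0)"

lemma prob_no_long_jump_ge_short_range:
  assumes z: "z \<in> vertices d"
  shows "ennreal (measure_pmf.prob N {..m}) \<le> emeasure (APRR d N p q) {w\<in>space (APRR d N p q). \<not> long_jump w z m}"
proof -
  interpret product_prob_space "aprr_factor N p q" "index_set d"
    by (rule product_prob_space_aprr_factor)
  have "Range z \<in> index_set d"
    using z by (auto simp: index_set_def)
  then have "emeasure (APRR d N p q) {w\<in>space (APRR d N p q). w (Range z) \<in> {..m}}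
      = ennreal (measure_pmf.prob N {..m})"
    unfolding APRR_def
    by (subst emeasure_PiM_Collect_single) (auto simp: coord_pmf_def measure_pmf.emeasure_eq_measure)
  moreover have "{w\<in>space (APRR d N p q). w (Range z) \<in> {..m}} \<subseteq> {w\<in>space (APRR d N p q). \<not> long_jump w z m}"
    by (auto simp: long_jump_def)
  then have "emeasure (APRR d N p q) {w\<in>space (APRR d N p q). w (Range z) \<in> {..m}}
      \<le> emeasure (APRR d N p q) {w\<in>space (APRR d N p q). \<not> long_jump w z m}"
    by (intro emeasure_mono) measurable
  ultimately show ?thesis
    by simp
qed

lemma prob_no_long_jump_ge_all_closed:
  assumes z: "z \<in> vertices d" and p: "0 \<le> p" "p \<le> 1"
  shows "ennreal (measure_pmf.prob N {..M0} * (1 - p) ^ M0)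
       \<le> emeasure (APRR d N p q) {w\<in>space (APRR d N p q). \<not> long_jump w z m}"
proof -
  interpret product_prob_space "aprr_factor N p q" "index_set d"
    by (rule product_prob_space_aprr_factor)
  define J where "J = insert (Range z) (Hbond z ` {1..M0})"
  define X where "X = (\<lambda>i. if i = Range z then {..M0} else {0::nat})"
  have "J \<subseteq> index_set d"
    using z by (auto simp: J_def index_set_def)
  then have "emeasure (APRR d N p q) {w\<in>space (APRR d N p q). \<forall>i\<in>J. w i \<in> X i}
      = (\<Prod>i\<in>J. emeasure (aprr_factor N p q i) (X i))"
    unfolding APRR_def by (intro emeasure_PiM_Collect) (auto simp: J_def)
  also have "\<dots> = emeasure (measure_pmf N) {..M0} * (\<Prod>i\<in>Hbond z ` {1..M0}. emeasure (aprr_factor N p q i) (X i))"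
    unfolding J_def by (subst prod.insert) (auto simp: X_def coord_pmf_def)
  also have "(\<Prod>i\<in>Hbond z ` {1..M0}. emeasure (aprr_factor N p q i) (X i)) = (\<Prod>n\<in>{1..M0}. ennreal (1 - p))"
    using p by (subst prod.reindex) (auto simp: inj_on_def X_def coord_pmf_def emeasure_bond_pmf(2))
  also have "\<dots> = ennreal ((1 - p) ^ M0)"
    using p by (simp add: prod_ennreal[symmetric] ennreal_power)
  also have "emeasure (measure_pmf N) {..M0} * ennreal ((1 - p) ^ M0) = ennreal (measure_pmf.prob N {..M0} * (1 - p) ^ M0)"
    using p by (simp add: measure_pmf.emeasure_eq_measure ennreal_mult)
  finally have "emeasure (APRR d N p q) {w\<in>space (APRR d N p q). \<forall>i\<in>J. w i \<in> X i}
      = ennreal (measure_pmf.prob N {..M0} * (1 - p) ^ M0)" .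
  moreover have "{w\<in>space (APRR d N p q). \<forall>i\<in>J. w i \<in> X i} \<subseteq> {w\<in>space (APRR d N p q). \<not> long_jump w z m}"
  proof safe
    fix w assume w: "\<forall>i\<in>J. w i \<in> X i" "long_jump w z m"
    then obtain n where n: "m < n" "n \<le> w (Range z)" "w (Hbond z n) = 1"
      by (auto simp: long_jump_def)
    moreover have "w (Range z) \<le> M0"
      using w(1) by (auto simp: J_def X_def)
    ultimately show False
      using w(1) by (auto simp: J_def X_def)
  qed
  then have "emeasure (APRR d N p q) {w\<in>space (APRR d N p q). \<forall>i\<in>J. w i \<in> X i}
      \<le> emeasure (APRR d N p q) {w\<in>space (APRR d N p q). \<not> long_jump w z m}"
    by (intro emeasure_mono) measurable
  ultimately show ?thesis
    by simp
qed

lemma prob_no_long_jumps_ge_prod: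
  assumes a: "a \<in> vertices d" and d: "0 < d" and p: "0 \<le> p" "p \<le> 1" and S: "finite S"
  shows "(\<Prod>i\<in>S. ennreal (no_long_jump_lb N p M0 (m i)))
       \<le> emeasure (APRR d N p q) {w\<in>space (APRR d N p q). \<forall>i\<in>S. \<not> long_jump w (hpoint a i) (m i)}"
  using S
proof (induction S rule: finite_induct)
  case empty
  then show ?case
    using prob_space.emeasure_space_1[OF prob_space_APRR] by simp
next
  case (insert j S)
  let ?O = "APRR d N p q"
  let ?line = "hline_coords d a S"
  have "emeasure ?O {w\<in>space ?O. \<forall>i\<in>insert j S. \<not> long_jump w (hpoint a i) (m i)}
      = emeasure ?O {w\<in>space ?O. \<not> long_jump w (hpoint a j) (m j) \<and> (\<forall>i\<in>S. \<not> long_jump w (hpoint a i) (m i))}"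
    by simp
  also have "\<dots> = emeasure ?O {w\<in>space ?O. \<not> long_jump w (hpoint a j) (m j)}
      * emeasure ?O {w\<in>space ?O. \<forall>i\<in>S. \<not> long_jump w (hpoint a i) (m i)}"
  proof (rule emeasure_APRR_conj_indep[of "index_set d - ?line" d ?line])
    fix w w' assume w: "w \<in> space ?O" "w' \<in> space ?O" "\<forall>i\<in>index_set d - ?line. w i = w' i"
    show "(\<not> long_jump w (hpoint a j) (m j)) = (\<not> long_jump w' (hpoint a j) (m j))"
      using insert(2) by (subst long_jump_APRR_cong[OF w]) (auto simp: hline_coords_def dest: hpoint_inj)
  next
    fix w w' assume w: "w \<in> space ?O" "w' \<in> space ?O" "\<forall>i\<in>?line. w i = w' i"
    have "long_jump w (hpoint a i) (m i) = long_jump w' (hpoint a i) (m i)" if "i \<in> S" for i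
      using that by (intro long_jump_APRR_cong[OF w]) (auto simp: hline_coords_def)
    then show "(\<forall>i\<in>S. \<not> long_jump w (hpoint a i) (m i)) = (\<forall>i\<in>S. \<not> long_jump w' (hpoint a i) (m i))"
      by simp
  qed (use insert(1) in \<open>auto simp: hline_coords_def\<close>)
  finally have "emeasure ?O {w\<in>space ?O. \<forall>i\<in>insert j S. \<not> long_jump w (hpoint a i) (m i)}
      = emeasure ?O {w\<in>space ?O. \<not> long_jump w (hpoint a j) (m j)}
      * emeasure ?O {w\<in>space ?O. \<forall>i\<in>S. \<not> long_jump w (hpoint a i) (m i)}" .
  moreover have "ennreal (no_long_jump_lb N p M0 (m j)) \<le> emeasure ?O {w\<in>space ?O. \<not> long_jump w (hpoint a j) (m j)}"
    using prob_no_long_jump_ge_short_range prob_no_long_jump_ge_all_closed hpoint_in_vertices[OF a d] p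
    by (simp add: no_long_jump_lb_def max_def)
  ultimately show ?case
    using insert by (simp add: mult_mono)
qed

definition horizontal_cut :: "(idx \<Rightarrow> nat) \<Rightarrow> nat \<Rightarrow> bool" where
  "horizontal_cut w s \<longleftrightarrow> (\<forall>i\<in>{..<s}. \<not> long_jump w (hpoint origin i) (s - 1 - i))"

lemma horizontal_cut_measurable [measurable]: "Measurable.pred (APRR d N p q) (\<lambda>w. horizontal_cut w s)"
  unfolding horizontal_cut_def by measurable

lemma prob_horizontal_cut_ge:
  assumes "0 < d" "0 \<le> p" "p \<le> 1"
  shows "(\<Prod>i<s. ennreal (no_long_jump_lb N p M0 (s - 1 - i)))
       \<le> emeasure (APRR d N p q) {w\<in>space (APRR d N p q). horizontal_cut w s}"
  unfolding horizontal_cut_def by (rule prob_no_long_jumps_ge_prod[OF origin_in_vertices assms]) simp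

lemma emeasure_horizontal_cut_covered:
  assumes d: "0 < d"
  shows "emeasure (APRR d N p q) {w\<in>space (APRR d N p q). horizontal_cut w s \<and> covered w (hpoint origin s) t}
     = emeasure (APRR d N p q) {w\<in>space (APRR d N p q). horizontal_cut w s} * cover_prob d N p q t"
proof -
  let ?O = "APRR d N p q"
  let ?line = "hline_coords d origin {s..}"
  have "emeasure ?O {w\<in>space ?O. horizontal_cut w s \<and> covered w (hpoint origin s) t}
     = emeasure ?O {w\<in>space ?O. horizontal_cut w s} * emeasure ?O {w\<in>space ?O. covered w (hpoint origin s) t}"
  proof (rule emeasure_APRR_conj_indep[of "index_set d - ?line" d ?line])
    fix w w' assume w: "w \<in> space ?O" "w' \<in> space ?O" "\<forall>i\<in>index_set d - ?line. w i = w' i"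
    have "long_jump w (hpoint origin i) m = long_jump w' (hpoint origin i) m" if "i < s" for i m
      using that by (intro long_jump_APRR_cong[OF w]) (auto simp: hline_coords_def dest: hpoint_inj)
    then show "horizontal_cut w s = horizontal_cut w' s"
      by (simp add: horizontal_cut_def)
  next
    fix w w' assume w: "w \<in> space ?O" "w' \<in> space ?O" "\<forall>i\<in>?line. w i = w' i"
    have "long_jump w (hpoint origin (s + i)) m = long_jump w' (hpoint origin (s + i)) m" for i m
      by (intro long_jump_APRR_cong[OF w]) (auto simp: hline_coords_def)
    then show "covered w (hpoint origin s) t = covered w' (hpoint origin s) t"
      by (simp add: covered_def)
  qed (use d in \<open>auto simp: hline_coords_def\<close>)
  also have "emeasure ?O {w\<in>space ?O. covered w (hpoint origin s) t} = cover_prob d N p q t"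
    unfolding cover_prob_def by (rule emeasure_covered_translate[OF hpoint_in_vertices[OF origin_in_vertices d] d])
  finally show ?thesis .
qed

lemma covered_imp_not_horizontal_cut:
  assumes "s < s'" "s' \<le> n" "covered w (hpoint origin s) (n - s)"
  shows "\<not> horizontal_cut w s'"
proof -
  have "s' - s - 1 < n - s"
    using assms by auto
  with assms(3) obtain i where i: "i \<le> s' - s - 1" "long_jump w (hpoint origin (s + i)) (s' - s - 1 - i)"
    unfolding covered_def by fastforce
  then have "s + i < s'" "s' - 1 - (s + i) = s' - s - 1 - i"
    using assms by auto
  then show ?thesis
    using i unfolding horizontal_cut_def by force
qed

lemma sum_prob_horizontal_cut_le_1:
  assumes d: "0 < d"
  shows "(\<Sum>s\<le>n. emeasure (APRR d N p q) {w\<in>space (APRR d N p q). horizontal_cut w s} * cover_prob d N p q (n - s)) \<le> 1"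
proof -
  let ?O = "APRR d N p q"
  let ?D = "\<lambda>s. {w\<in>space ?O. horizontal_cut w s \<and> covered w (hpoint origin s) (n - s)}"
  have "disjoint_family_on ?D {..n}"
    unfolding disjoint_family_on_def
  proof (intro ballI impI)
    fix s s' assume "s \<in> {..n}" "s' \<in> {..n}" "s \<noteq> s'"
    then show "?D s \<inter> ?D s' = {}"
      using covered_imp_not_horizontal_cut[of s s' n] covered_imp_not_horizontal_cut[of s' s n]
      by (cases "s < s'") auto
  qed
  then have "(\<Sum>s\<le>n. emeasure ?O (?D s)) = emeasure ?O (\<Union>s\<le>n. ?D s)"
    by (intro sum_emeasure) auto
  also have "\<dots> \<le> 1"
    using prob_space.emeasure_le_1[OF prob_space_APRR] by simp
  finally show ?thesis
    using d by (simp add: emeasure_horizontal_cut_covered)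
qed

lemma suminf_cover_prob_le:
  assumes d: "0 < d" and p: "0 \<le> p" "p \<le> 1"
    and c: "0 \<le> c" "\<And>S. finite S \<Longrightarrow> c \<le> (\<Prod>m\<in>S. no_long_jump_lb N p M0 m)"
  shows "ennreal c * suminf (cover_prob d N p q) \<le> 1"
proof -
  have lb_nonneg: "0 \<le> no_long_jump_lb N p M0 m" for m
    by (simp add: no_long_jump_lb_def max.coboundedI1)
  have cut: "ennreal c \<le> emeasure (APRR d N p q) {w\<in>space (APRR d N p q). horizontal_cut w s}" for s
  proof -
    have "inj_on (\<lambda>i. s - 1 - i) {..<s}"
      by (auto simp: inj_on_def)
    then have "c \<le> (\<Prod>i<s. no_long_jump_lb N p M0 (s - 1 - i))"
      using c(2)[of "(\<lambda>i. s - 1 - i) ` {..<s}"] by (simp add: prod.reindex)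
    then have "ennreal c \<le> (\<Prod>i<s. ennreal (no_long_jump_lb N p M0 (s - 1 - i)))"
      using lb_nonneg by (simp add: prod_ennreal ennreal_leI)
    also have "\<dots> \<le> emeasure (APRR d N p q) {w\<in>space (APRR d N p q). horizontal_cut w s}"
      by (rule prob_horizontal_cut_ge[OF d p])
    finally show ?thesis .
  qed
  have partial: "(\<Sum>t<Suc n. ennreal c * cover_prob d N p q t) \<le> 1" for n
  proof -
    have "(\<Sum>t<Suc n. ennreal c * cover_prob d N p q t) = (\<Sum>s\<le>n. ennreal c * cover_prob d N p q (n - s))"
      using sum.nat_diff_reindex[of "\<lambda>t. ennreal c * cover_prob d N p q t" "Suc n"]
      by (simp add: lessThan_Suc_atMost)
    also have "\<dots> \<le> (\<Sum>s\<le>n. emeasure (APRR d N p q) {w\<in>space (APRR d N p q). horizontal_cut w s} * cover_prob d N p q (n - s))"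
      by (intro sum_mono mult_right_mono cut) auto
    also have "\<dots> \<le> 1"
      by (rule sum_prob_horizontal_cut_le_1[OF d])
    finally show ?thesis .
  qed
  have "(\<Sum>t. ennreal c * cover_prob d N p q t) \<le> 1"
  proof (intro suminf_le_const summableI)
    fix n
    show "(\<Sum>t<n. ennreal c * cover_prob d N p q t) \<le> 1"
      using partial by (cases n) auto
  qed
  then show ?thesis
    by (simp add: ennreal_suminf_cmult)
qed

lemma one_minus_sum_le_prod:
  fixes a :: "'a \<Rightarrow> real"
  assumes "finite S" "\<And>m. m \<in> S \<Longrightarrow> 0 \<le> a m" "\<And>m. m \<in> S \<Longrightarrow> a m \<le> 1"
  shows "1 - (\<Sum>m\<in>S. a m) \<le> (\<Prod>m\<in>S. 1 - a m)"
  using assms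
proof (induction S rule: finite_induct)
  case (insert j S)
  have IH: "1 - (\<Sum>m\<in>S. a m) \<le> (\<Prod>m\<in>S. 1 - a m)" and aj: "0 \<le> a j" "a j \<le> 1"
    using insert by auto
  have "0 \<le> (\<Sum>m\<in>S. a m)"
    using insert by (auto intro: sum_nonneg)
  then have "1 - (\<Sum>m\<in>insert j S. a m) \<le> (1 - a j) * (1 - (\<Sum>m\<in>S. a m))"
    using insert aj by (simp add: algebra_simps)
  also have "\<dots> \<le> (1 - a j) * (\<Prod>m\<in>S. 1 - a m)"
    using IH aj by (intro mult_left_mono) auto
  finally show ?case
    using insert by simp
qed simp

lemma prod_bounded_below:
  fixes r a :: "nat \<Rightarrow> real"
  assumes a: "summable a" "\<And>m. 0 \<le> a m" "\<And>m. a m \<le> 1"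
    and e: "0 < e" "e \<le> 1" and r: "\<And>m. e \<le> r m" "\<And>m. 1 - a m \<le> r m"
  obtains c where "0 < c" "\<And>S. finite S \<Longrightarrow> c \<le> (\<Prod>m\<in>S. r m)"
proof -
  obtain n0 where n0: "norm (\<Sum>i. a (i + n0)) < 1/2"
    using suminf_exist_split[of "1/2" a] a(1) by auto
  have "e ^ n0 / 2 \<le> (\<Prod>m\<in>S. r m)" if S: "finite S" for S
  proof -
    define S1 where "S1 = S \<inter> {..<n0}"
    define S2 where "S2 = S - {..<n0}"
    have r_nonneg: "0 \<le> r m" for m
      using r(1)[of m] e by simp
    have "e ^ n0 \<le> e ^ card S1"
      using e card_mono[of "{..<n0}" S1] by (intro power_decreasing) (auto simp: S1_def)
    also have "\<dots> \<le> (\<Prod>m\<in>S1. r m)"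
      using e r(1) prod_mono[of S1 "\<lambda>_. e" r] by simp
    finally have P1: "e ^ n0 \<le> (\<Prod>m\<in>S1. r m)" .
    have "(\<Sum>m\<in>S2. a m) = (\<Sum>i\<in>(\<lambda>m. m - n0) ` S2. a (i + n0))"
      by (subst sum.reindex) (auto simp: inj_on_def S2_def intro!: sum.cong)
    also have "\<dots> \<le> (\<Sum>i. a (i + n0))"
      using S a by (intro sum_le_suminf) (auto simp: S2_def summable_iff_shift)
    finally have "1/2 \<le> 1 - (\<Sum>m\<in>S2. a m)"
      using n0 by simp
    also have "\<dots> \<le> (\<Prod>m\<in>S2. 1 - a m)"
      using S a by (intro one_minus_sum_le_prod) (auto simp: S2_def)
    also have "\<dots> \<le> (\<Prod>m\<in>S2. r m)"
      using r(2) a(3) by (intro prod_mono) auto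
    finally have P2: "1/2 \<le> (\<Prod>m\<in>S2. r m)" .
    have "e ^ n0 / 2 \<le> (\<Prod>m\<in>S1. r m) * (\<Prod>m\<in>S2. r m)"
      using mult_mono[OF P1 P2] e by (simp add: prod_nonneg r_nonneg)
    also have "\<dots> = (\<Prod>m\<in>S. r m)"
      using S by (subst prod.union_disjoint[symmetric]) (auto simp: S1_def S2_def intro: prod.cong)
    finally show ?thesis .
  qed
  moreover have "0 < e ^ n0 / 2"
    using e by simp
  ultimately show ?thesis
    using that by blast
qed

text \<open>\<open>E N = \<Sum>\<^sub>m P(N > m)\<close>, so a finite mean makes \<open>1 - P(N \<le> m)\<close> summable.\<close>

lemma summable_tail_prob:
  assumes "(\<integral>\<^sup>+ n. ennreal (real n) \<partial>measure_pmf N) < \<infinity>"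
  shows "summable (\<lambda>m. 1 - measure_pmf.prob N {..m})"
proof -
  have tail: "ennreal (1 - measure_pmf.prob N {..m}) = emeasure (measure_pmf N) {m<..}" for m
  proof -
    have "{m<..} = space (measure_pmf N) - {..m}"
      by auto
    then show ?thesis
      using measure_pmf.prob_compl[of "{..m}" N] by (simp add: measure_pmf.emeasure_eq_measure)
  qed
  have count: "ennreal (real n) = (\<Sum>m. indicator {m<..} n)" for n
  proof -
    have "(\<Sum>m. indicator {m<..} n :: ennreal) = (\<Sum>m<n. indicator {m<..} n)"
      by (rule suminf_finite) auto
    then show ?thesis
      by (simp add: ennreal_of_nat_eq_real_of_nat)
  qed
  have "(\<Sum>m. ennreal (1 - measure_pmf.prob N {..m})) = (\<integral>\<^sup>+ n. (\<Sum>m. indicator {m<..} n) \<partial>measure_pmf N)"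
    by (simp add: tail nn_integral_suminf)
  also have "\<dots> = (\<integral>\<^sup>+ n. ennreal (real n) \<partial>measure_pmf N)"
    by (simp add: count)
  finally show ?thesis
    using assms by (intro summable_suminf_not_top) auto
qed

lemma no_long_jump_lb_prod_bounded_below:
  assumes EN: "(\<integral>\<^sup>+ n. ennreal (real n) \<partial>measure_pmf N) < \<infinity>" and p: "0 \<le> p" "p < 1"
  obtains M0 c where "0 < c" "\<And>S. finite S \<Longrightarrow> c \<le> (\<Prod>m\<in>S. no_long_jump_lb N p M0 m)"
proof -
  obtain M0 where "M0 \<in> set_pmf N"
    using set_pmf_not_empty[of N] by blast
  then have "0 < measure_pmf.prob N {M0}"
    by (simp add: measure_pmf_single pmf_positive)
  also have "\<dots> \<le> measure_pmf.prob N {..M0}"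
    by (rule measure_pmf.finite_measure_mono) auto
  finally have "0 < measure_pmf.prob N {..M0}" .
  then have e: "0 < measure_pmf.prob N {..M0} * (1 - p) ^ M0"
    using p by simp
  have e_le_1: "measure_pmf.prob N {..M0} * (1 - p) ^ M0 \<le> 1"
    using p by (intro mult_le_one measure_pmf.prob_le_1 power_le_one) auto
  obtain c where "0 < c" "\<And>S. finite S \<Longrightarrow> c \<le> (\<Prod>m\<in>S. no_long_jump_lb N p M0 m)"
    by (rule prod_bounded_below[OF summable_tail_prob[OF EN] _ _ e e_le_1, of "no_long_jump_lb N p M0"])
      (auto simp: no_long_jump_lb_def)
  then show ?thesis
    by (rule that)
qed

lemma suminf_cover_prob_bounded:
  assumes d: "0 < d" and EN: "(\<integral>\<^sup>+ n. ennreal (real n) \<partial>measure_pmf N) < \<infinity>" and p: "0 \<le> p" "p < 1"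
  obtains C where "0 < C" "\<And>q. suminf (cover_prob d N p q) \<le> ennreal C"
proof -
  obtain M0 c where c: "0 < c" "\<And>S. finite S \<Longrightarrow> c \<le> (\<Prod>m\<in>S. no_long_jump_lb N p M0 m)"
    using no_long_jump_lb_prod_bounded_below[OF EN p] by blast
  show ?thesis
  proof
    show "0 < 1 / c"
      using c by simp
    fix q
    have inv: "ennreal (1 / c) * ennreal c = 1"
      using c by (simp add: ennreal_mult[symmetric])
    have "suminf (cover_prob d N p q) = ennreal (1 / c) * (ennreal c * suminf (cover_prob d N p q))"
      by (simp add: mult.assoc[symmetric] inv)
    also have "\<dots> \<le> ennreal (1 / c) * 1"
      using c p by (intro mult_left_mono suminf_cover_prob_le[OF d]) auto
    finally show "suminf (cover_prob d N p q) \<le> ennreal (1 / c)"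
      by simp
  qed
qed

section \<open>Measurability of the percolation event\<close>

lemma inj_on_vertices_to_list: "inj_on (\<lambda>v. map v [0..<d]) (vertices d)"
proof (rule inj_onI)
  fix u v assume uv: "u \<in> vertices d" "v \<in> vertices d" "map u [0..<d] = map v [0..<d]"
  show "u = v"
  proof
    fix j
    show "u j = v j"
      using uv by (cases "j < d") (auto simp: map_eq_conv vertices_def)
  qed
qed

lemma countable_vertices: "countable (vertices d)"
  by (rule countable_image_inj_on[OF _ inj_on_vertices_to_list]) simp

lemma open_bond_in_vertices: "open_bond d w x y \<Longrightarrow> 0 < d \<Longrightarrow> x \<in> vertices d \<and> y \<in> vertices d"
  unfolding open_bond_def using shift_in_vertices[of x d] by auto

lemma reachable_in_vertices: "(open_bond d w)\<^sup>*\<^sup>* origin y \<Longrightarrow> 0 < d \<Longrightarrow> y \<in> vertices d"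
  by (induction rule: rtranclp_induct) (auto simp: origin_in_vertices dest: open_bond_in_vertices)

lemma open_bond_measurable [measurable]: "Measurable.pred (APRR d N p q) (\<lambda>w. open_bond d w x y)"
  unfolding open_bond_def by measurable

lemma relpowp_open_bond_measurable:
  assumes d: "0 < d"
  shows "Measurable.pred (APRR d N p q) (\<lambda>w. (open_bond d w ^^ m) x y)"
proof (induction m arbitrary: y)
  case (Suc m)
  have "{w \<in> space (APRR d N p q). \<exists>z\<in>vertices d. (open_bond d w ^^ m) x z \<and> open_bond d w z y} \<in> sets (APRR d N p q)"
  proof (rule sets.sets_Collect_countable_Ex'[OF _ countable_vertices])
    fix z
    note Suc.IH[of z, measurable]
    show "{w \<in> space (APRR d N p q). (open_bond d w ^^ m) x z \<and> open_bond d w z y} \<in> sets (APRR d N p q)"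
      by measurable
  qed
  moreover have "(open_bond d w ^^ Suc m) x y \<longleftrightarrow> (\<exists>z\<in>vertices d. (open_bond d w ^^ m) x z \<and> open_bond d w z y)" for w
    using d by (auto dest: open_bond_in_vertices)
  ultimately show ?case
    unfolding pred_def by simp
qed simp

lemma reachable_measurable [measurable]:
  "0 < d \<Longrightarrow> Measurable.pred (APRR d N p q) (\<lambda>w. (open_bond d w)\<^sup>*\<^sup>* x y)"
  unfolding rtranclp_power using relpowp_open_bond_measurable by measurable

definition l1_norm :: "nat \<Rightarrow> (nat \<Rightarrow> int) \<Rightarrow> nat" where
  "l1_norm d y = (\<Sum>j<d. nat \<bar>y j\<bar>)"

lemma finite_l1_ball: "finite {y\<in>vertices d. l1_norm d y < n}"
proof -
  let ?f = "\<lambda>v. map v [0..<d]"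
  have "?f ` {y\<in>vertices d. l1_norm d y < n} \<subseteq> {xs. set xs \<subseteq> {-int n..int n} \<and> length xs = d}"
  proof clarsimp
    fix y j assume y: "l1_norm d y < n" "j < d"
    have "nat \<bar>y j\<bar> \<le> l1_norm d y"
      unfolding l1_norm_def using y(2) by (intro member_le_sum) auto
    then show "- int n \<le> y j \<and> y j \<le> int n"
      using y(1) by linarith
  qed
  then have "finite (?f ` {y\<in>vertices d. l1_norm d y < n})"
    by (rule finite_subset) (intro finite_lists_length_eq, simp)
  then show ?thesis
    by (rule finite_imageD) (rule inj_on_subset[OF inj_on_vertices_to_list], auto)
qed

lemma infinite_reachable_iff_unbounded:
  assumes d: "0 < d"
  shows "infinite {y. (open_bond d w)\<^sup>*\<^sup>* origin y}
     \<longleftrightarrow> (\<forall>n. \<exists>y\<in>vertices d. n \<le> l1_norm d y \<and> (open_bond d w)\<^sup>*\<^sup>* origin y)"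
    (is "infinite ?R \<longleftrightarrow> _")
proof
  assume inf: "infinite ?R"
  show "\<forall>n. \<exists>y\<in>vertices d. n \<le> l1_norm d y \<and> (open_bond d w)\<^sup>*\<^sup>* origin y"
  proof (rule ccontr)
    assume "\<not> ?thesis"
    then obtain n where "\<forall>y\<in>vertices d. (open_bond d w)\<^sup>*\<^sup>* origin y \<longrightarrow> l1_norm d y < n"
      by (auto simp: not_le)
    then have "?R \<subseteq> {y\<in>vertices d. l1_norm d y < n}"
      using reachable_in_vertices d by blast
    then show False
      using inf finite_l1_ball finite_subset by blast
  qed
next
  assume unbounded: "\<forall>n. \<exists>y\<in>vertices d. n \<le> l1_norm d y \<and> (open_bond d w)\<^sup>*\<^sup>* origin y"
  show "infinite ?R"
  proof
    assume fin: "finite ?R"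
    obtain y where y: "Suc (Max (l1_norm d ` ?R)) \<le> l1_norm d y" "(open_bond d w)\<^sup>*\<^sup>* origin y"
      using unbounded by blast
    then have "l1_norm d y \<le> Max (l1_norm d ` ?R)"
      using fin by (intro Max_ge) auto
    then show False
      using y by simp
  qed
qed

lemma perc_event_sets:
  assumes d: "0 < d"
  shows "perc_event d \<inter> space (APRR d N p q) \<in> sets (APRR d N p q)"
proof -
  have "perc_event d \<inter> space (APRR d N p q)
      = {w\<in>space (APRR d N p q). \<forall>n. \<exists>y\<in>vertices d. n \<le> l1_norm d y \<and> (open_bond d w)\<^sup>*\<^sup>* origin y}"
    by (auto simp: perc_event_def infinite_reachable_iff_unbounded[OF d])
  also have "\<dots> \<in> sets (APRR d N p q)"
  proof (rule sets.sets_Collect_countable_All)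
    fix n
    show "{w\<in>space (APRR d N p q). \<exists>y\<in>vertices d. n \<le> l1_norm d y \<and> (open_bond d w)\<^sup>*\<^sup>* origin y} \<in> sets (APRR d N p q)"
      using d by (intro sets.sets_Collect_countable_Ex'[OF _ countable_vertices]) measurable
  qed
  finally show ?thesis .
qed

lemma perc_event_imp_covered_paths_infinite:
  assumes "w \<in> perc_event d"
  shows "(\<Sum>k. covered_paths d w origin k) = \<infinity>"
proof -
  have "\<infinity> = emeasure (count_space UNIV) {y. (open_bond d w)\<^sup>*\<^sup>* origin y}"
    using assms by (simp add: perc_event_def emeasure_count_space_infinite)
  also have "\<dots> \<le> emeasure (count_space UNIV) (\<Union>k. covered_endpoints d w origin k)"
    using reachable_in_covered_endpoints by (intro emeasure_mono) auto
  also have "\<dots> \<le> (\<Sum>k. emeasure (count_space UNIV) (covered_endpoints d w origin k))"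
    by (rule emeasure_subadditive_countably) auto
  also have "\<dots> \<le> (\<Sum>k. covered_paths d w origin k)"
    by (intro suminf_le summableI card_covered_endpoints_le)
  finally show ?thesis
    by (simp add: top_unique)
qed

lemma nn_integral_covered_paths_finite:
  assumes d: "0 < d" and q: "0 \<le> q" "q \<le> 1"
    and C: "0 \<le> C" "suminf (cover_prob d N p q) \<le> ennreal C"
    and subcritical: "of_nat (d - 1) * ennreal q * suminf (cover_prob d N p q) \<le> ennreal (1/2)"
  shows "(\<integral>\<^sup>+w. (\<Sum>k. covered_paths d w origin k) \<partial>APRR d N p q) \<noteq> \<infinity>"
proof -
  have "(\<integral>\<^sup>+w. (\<Sum>k. covered_paths d w origin k) \<partial>APRR d N p q) = (\<Sum>k. \<integral>\<^sup>+w. covered_paths d w origin k \<partial>APRR d N p q)"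
    by (rule nn_integral_suminf) simp
  also have "\<dots> \<le> (\<Sum>k. ennreal C * ennreal (1/2) ^ k)"
  proof (intro suminf_le summableI)
    fix k
    have "(\<integral>\<^sup>+w. covered_paths d w origin k \<partial>APRR d N p q)
        \<le> suminf (cover_prob d N p q) * (of_nat (d - 1) * ennreal q * suminf (cover_prob d N p q)) ^ k"
      by (rule nn_integral_covered_paths_le[OF origin_in_vertices d q])
    also have "\<dots> \<le> ennreal C * ennreal (1/2) ^ k"
      using C subcritical by (intro mult_mono power_mono) auto
    finally show "(\<integral>\<^sup>+w. covered_paths d w origin k \<partial>APRR d N p q) \<le> ennreal C * ennreal (1/2) ^ k" .
  qed
  also have "\<dots> = (\<Sum>k. ennreal (C * (1/2) ^ k))"
  proof -
    have "ennreal (1/2) ^ k = ennreal ((1/2) ^ k)" for k :: nat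
      by (rule ennreal_power) simp
    then show ?thesis
      by (simp only: ennreal_mult'[OF C(1)])
  qed
  finally have "(\<integral>\<^sup>+w. (\<Sum>k. covered_paths d w origin k) \<partial>APRR d N p q) \<le> (\<Sum>k. ennreal (C * (1/2) ^ k))" .
  moreover have "(\<Sum>k. ennreal (C * (1/2) ^ k)) \<noteq> \<top>"
    using C by (intro ennreal_suminf_neq_top summable_mult summable_geometric) auto
  ultimately show ?thesis
    by (metis infinity_ennreal_def top.extremum_unique)
qed

lemma theta_eq_0_if_subcritical:
  assumes d: "0 < d" and q: "0 \<le> q" "q \<le> 1"
    and C: "0 \<le> C" "suminf (cover_prob d N p q) \<le> ennreal C" and subcritical: "real (d - 1) * q * C \<le> 1/2"
  shows "theta d N p q = 0"
proof -
  have "of_nat (d - 1) * ennreal q * suminf (cover_prob d N p q) \<le> of_nat (d - 1) * ennreal q * ennreal C"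
    using C by (intro mult_left_mono) auto
  also have "\<dots> = ennreal (real (d - 1) * q * C)"
    using q C by (simp add: ennreal_mult ennreal_of_nat_eq_real_of_nat)
  also have "\<dots> \<le> ennreal (1/2)"
    using subcritical by (rule ennreal_leI)
  finally have "AE w in APRR d N p q. (\<Sum>k. covered_paths d w origin k) \<noteq> \<infinity>"
    using nn_integral_covered_paths_finite[OF d q C] by (intro nn_integral_PInf_AE) simp_all
  then have "AE w in APRR d N p q. w \<notin> perc_event d"
    by eventually_elim (use perc_event_imp_covered_paths_infinite in auto)
  then have "emeasure (APRR d N p q) (perc_event d \<inter> space (APRR d N p q)) = 0"
    by (subst (asm) AE_iff_measurable[OF perc_event_sets[OF d]]) auto
  then show ?thesis
    by (simp add: theta_def measure_def)
qed

lemma exists_small_factor: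
  fixes r C :: real
  assumes "1 \<le> r" "0 < C"
  obtains q where "0 < q" "q \<le> 1" "r * q * C \<le> 1/2"
proof
  let ?q = "1 / (2 * r * (C + 1))"
  have "0 \<le> 2 * r * C"
    using assms by simp
  then have "1 \<le> 2 * r * C + 2 * r"
    using assms(1) by linarith
  then have pos: "1 \<le> 2 * r * (C + 1)"
    by (simp add: distrib_left)
  then show "0 < ?q" "?q \<le> 1"
    by simp_all
  have "r * ?q * (C + 1) = 1/2"
    using pos by (simp add: field_simps)
  moreover have "r * ?q * C \<le> r * ?q * (C + 1)"
    using assms by (intro mult_left_mono) auto
  ultimately show "r * ?q * C \<le> 1/2"
    by simp
qed

theorem theorem3:
  fixes d :: nat and N :: "nat pmf" and p :: real
  assumes "d \<ge> 2"
    and "(\<integral>\<^sup>+ n. ennreal (real n) \<partial>measure_pmf N) < \<infinity>"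
    and "0 \<le> p" and "p < 1"
  shows "\<exists>q. 0 < q \<and> q \<le> 1 \<and>
           perc_event d \<inter> space (APRR d N p q) \<in> sets (APRR d N p q) \<and>
           theta d N p q = 0"
proof -
  have d: "0 < d"
    using assms(1) by simp
  obtain C where C: "0 < C" "\<And>q. suminf (cover_prob d N p q) \<le> ennreal C"
    using suminf_cover_prob_bounded[OF d assms(2-4)] by blast
  obtain q where q: "0 < q" "q \<le> 1" "real (d - 1) * q * C \<le> 1/2"
    using exists_small_factor[of "real (d - 1)" C] assms(1) C(1) by auto
  have "theta d N p q = 0"
    using q C by (intro theta_eq_0_if_subcritical[OF d]) auto
  then show ?thesis
    using q perc_event_sets[OF d] by auto
qed

end
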